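(* Let $I^h\subset\mathbb{K}[S_M^h]$ be a homogeneous ideal, $G$ a sparse Gröbner basis of $I^h$ with respect to $\prec_h$ consisting of homogeneous polynomials, and $D\in\mathbb{N}$. Let $\mathcal{N}$ be the set of monomials $X^{(s,D)}\in\mathbb{K}[S_M^h]_D$ for which some $g\in G$ satisfies $\mathrm{LM}_{\prec_h}(g)\mid_\delta X^{(s,D)}$. Associate to each $X^{(s,D)}\in\mathcal{N}$ exactly one such $g$, and let $\mathcal{R}$ be the set of polynomials $X^t\cdot g$, where $X^{(s,D)}\in\mathcal{N}$, $g$ is its associated polynomial and $X^t$ is the monomial with $X^t\cdot\mathrm{LM}_{\prec_h}(g)=X^{(s,D)}$ and $\delta(X^t)+\delta(\mathrm{LM}_{\prec_h}(g))=\delta(X^{(s,D)})$. Let $\mathcal{M}'_D$ be the Macaulay matrix with columns indexed by all monomials of $\mathbb{K}[S_M^h]_D$ in decreasing order for $\prec_h$ and rows indexed by $\mathcal{R}$, and let $\mathcal{M}_D$ be the Macaulay matrix with the same columns and rows indexed by all products $X^{(u,D-\deg g)}\cdot g$ with $g\in G$ and $X^{(u,D-\deg g)}$ a monomial of $\mathbb{K}[S_M^h]_{D-\deg g}$. Let $\widetilde{\mathcal{M}'_D}$ and $\widetilde{\mathcal{M}_D}$ be their reduced row echelon forms. Then $\mathrm{Rows}(\widetilde{\mathcal{M}'_D})=\mathrm{Rows}(\widetilde{\mathcal{M}_D})$. Moreover, $\mathcal{M}'_D$ is full-rank and in row echelon form.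
   Context: Let $\mathbb{K}$ be a field of characteristic $0$, $M\subset\mathbb{R}^n$ a polytope with $0\in M$, $S_M\subset\mathbb{Z}^n$ the affine semigroup generated by $M\cap\mathbb{Z}^n$ and $S_M^h\subset\mathbb{Z}^{n+1}$ the one generated by $\{(s,1):s\in M\cap\mathbb{Z}^n\}$, both assumed pointed. $\mathbb{K}[S]$ is the semigroup algebra with monomials $X^s$, $X^sX^t=X^{s+t}$; $\mathbb{K}[S_M^h]$ is graded by $\deg X^{(s,d)}=d$, $\mathbb{K}[S_M^h]_d$ is the degree-$d$ part, and "homogeneous" refers to this grading. $\chi:\mathbb{K}[S_M^h]\to\mathbb{K}[S_M]$, $X^{(s,d)}\mapsto X^s$. The affine degree $\delta^A(X^s)$ is the least $d$ with $(s,d)\in S_M^h$, extended to polynomials by the maximum over the support; the sparse degree of $f\in\mathbb{K}[S_M^h]$ is $\delta(f)=\delta^A(\chi(f))$. Fix a monomial order $<_M$ on $\mathbb{K}[S_M]$; the sparse order is $X^s\prec X^r$ iff $\delta^A(X^s)<\delta^A(X^r)$, or equality and $X^s<_MX^r$; the graded sparse order is $X^{(s,d)}\prec_hX^{(r,d')}$ iff $d<d'$, or $d=d'$ and $X^s\prec X^r$. Divisibility: $X^{(s,d_s)}\mid_\delta X^{(r,d_r)}$ if some monomial $X^{(t,d_t)}$ satisfies $X^{(s,d_s)}X^{(t,d_t)}=X^{(r,d_r)}$ and $\delta(X^{(s,d_s)})+\delta(X^{(t,d_t)})=\delta(X^{(r,d_r)})$. A sparse Gröbner basis of $I^h$ w.r.t.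 $\prec_h$ is a subset of $I^h$ generating $I^h$ such that every nonzero $f\in I^h$ has some element $g$ of it with $\mathrm{LM}_{\prec_h}(g)\mid_\delta\mathrm{LM}_{\prec_h}(f)$. A Macaulay matrix has columns indexed by monomials (containing all monomials in the supports of the row polynomials) and rows indexed by polynomials; the entry at (row $f$, column $m$) is the coefficient of $m$ in $f$. $\mathrm{Rows}(\mathcal{M})$ is the set of nonzero polynomials represented by the rows of $\mathcal{M}$. *)

theory Defs
  imports "HOL-Library.Poly_Mapping" "HOL-Library.Function_Algebras" "HOL-Library.Product_Plus"
    "Jordan_Normal_Form.Gauss_Jordan_Elimination"
begin

text \<open>Points of Z^n are functions 'n => int (with 'n a finite index type), points of R^n are
  functions 'n => real.  Points of Z^(n+1) are pairs (s, d) with s in Z^n and d in Z.\<close>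

definition polytope :: "('n::finite \<Rightarrow> real) set \<Rightarrow> bool" where
  "polytope M \<longleftrightarrow> (\<exists>V. finite V \<and>
     M = {x. \<exists>u. (\<forall>v\<in>V. 0 \<le> u v) \<and> sum u V = 1 \<and> x = (\<lambda>i. \<Sum>v\<in>V. u v * v i)})"

definition lattice_pts :: "('n::finite \<Rightarrow> real) set \<Rightarrow> ('n \<Rightarrow> int) set" where
  "lattice_pts M = {s. (\<lambda>i. real_of_int (s i)) \<in> M}"

inductive_set gen_sg :: "'a::monoid_add set \<Rightarrow> 'a set" for A where
  zero: "0 \<in> gen_sg A"
| add: "a \<in> A \<Longrightarrow> x \<in> gen_sg A \<Longrightarrow> a + x \<in> gen_sg A"

definition pointed :: "'a::group_add set \<Rightarrow> bool" where
  "pointed S \<longleftrightarrow> (\<forall>s\<in>S. - s \<in> S \<longrightarrow> s = 0)"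

definition SM :: "('n::finite \<Rightarrow> real) set \<Rightarrow> ('n \<Rightarrow> int) set" where
  "SM M = gen_sg (lattice_pts M)"

definition SMh :: "('n::finite \<Rightarrow> real) set \<Rightarrow> (('n \<Rightarrow> int) \<times> int) set" where
  "SMh M = gen_sg ((\<lambda>s. (s, 1)) ` lattice_pts M)"

text \<open>K[S] is the set of finitely supported K-valued functions on the group with support in S;
  the monomial X^s is single s 1; multiplication is convolution (X^s X^t = X^(s+t)).\<close>

definition salg :: "'a set \<Rightarrow> ('a \<Rightarrow>\<^sub>0 'k::zero) set" where
  "salg S = {f. Poly_Mapping.keys f \<subseteq> S}"

definition mon :: "'a \<Rightarrow> 'a \<Rightarrow>\<^sub>0 'k::{zero,one}" where
  "mon s = Poly_Mapping.single s 1"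

definition is_ideal :: "'a::monoid_add set \<Rightarrow> ('a \<Rightarrow>\<^sub>0 'k::comm_ring_1) set \<Rightarrow> bool" where
  "is_ideal S I \<longleftrightarrow> I \<subseteq> salg S \<and> 0 \<in> I \<and> (\<forall>f\<in>I. \<forall>g\<in>I. f + g \<in> I)
     \<and> (\<forall>f\<in>I. \<forall>h\<in>salg S. h * f \<in> I)"

definition ideal_gen :: "'a::monoid_add set \<Rightarrow> ('a \<Rightarrow>\<^sub>0 'k::comm_ring_1) set \<Rightarrow> ('a \<Rightarrow>\<^sub>0 'k) set" where
  "ideal_gen S G = \<Inter>{I. is_ideal S I \<and> G \<subseteq> I}"

definition hom_comp :: "int \<Rightarrow> (('n \<Rightarrow> int) \<times> int \<Rightarrow>\<^sub>0 'k::comm_ring_1) \<Rightarrow> (('n \<Rightarrow> int) \<times> int \<Rightarrow>\<^sub>0 'k)" where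
  "hom_comp d f = (\<Sum>m\<in>{m\<in>Poly_Mapping.keys f. snd m = d}. Poly_Mapping.single m (Poly_Mapping.lookup f m))"

definition homogeneous :: "(('n \<Rightarrow> int) \<times> int \<Rightarrow>\<^sub>0 'k::zero) \<Rightarrow> bool" where
  "homogeneous f \<longleftrightarrow> (\<exists>d. \<forall>m\<in>Poly_Mapping.keys f. snd m = d)"

definition hdeg :: "(('n \<Rightarrow> int) \<times> int \<Rightarrow>\<^sub>0 'k::zero) \<Rightarrow> int" where
  "hdeg f = (SOME d. \<forall>m\<in>Poly_Mapping.keys f. snd m = d)"

definition homogeneous_ideal :: "(('n \<Rightarrow> int) \<times> int) set \<Rightarrow> (('n \<Rightarrow> int) \<times> int \<Rightarrow>\<^sub>0 'k::comm_ring_1) set \<Rightarrow> bool" where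
  "homogeneous_ideal S I \<longleftrightarrow> is_ideal S I \<and> (\<forall>f\<in>I. \<forall>d. hom_comp d f \<in> I)"

definition mons_deg :: "('n::finite \<Rightarrow> real) set \<Rightarrow> int \<Rightarrow> (('n \<Rightarrow> int) \<times> int) set" where
  "mons_deg M d = {m \<in> SMh M. snd m = d}"

definition adeg :: "('n::finite \<Rightarrow> real) set \<Rightarrow> ('n \<Rightarrow> int) \<Rightarrow> nat" where
  "adeg M s = (LEAST d::nat. (s, int d) \<in> SMh M)"

definition adeg_poly :: "('n::finite \<Rightarrow> real) set \<Rightarrow> (('n \<Rightarrow> int) \<Rightarrow>\<^sub>0 'k::zero) \<Rightarrow> nat" where
  "adeg_poly M f = Max (insert 0 (adeg M ` Poly_Mapping.keys f))"

definition chi :: "(('n \<Rightarrow> int) \<times> int \<Rightarrow>\<^sub>0 'k::comm_monoid_add) \<Rightarrow> (('n \<Rightarrow> int) \<Rightarrow>\<^sub>0 'k)" where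
  "chi f = (\<Sum>m\<in>Poly_Mapping.keys f. Poly_Mapping.single (fst m) (Poly_Mapping.lookup f m))"

definition sdeg :: "('n::finite \<Rightarrow> real) set \<Rightarrow> (('n \<Rightarrow> int) \<times> int \<Rightarrow>\<^sub>0 'k::{comm_monoid_add,one}) \<Rightarrow> nat" where
  "sdeg M f = adeg_poly M (chi f)"

definition monomial_order :: "'a::monoid_add set \<Rightarrow> ('a \<Rightarrow> 'a \<Rightarrow> bool) \<Rightarrow> bool" where
  "monomial_order S lt \<longleftrightarrow>
     (\<forall>x\<in>S. \<not> lt x x) \<and>
     (\<forall>x\<in>S. \<forall>y\<in>S. \<forall>z\<in>S. lt x y \<longrightarrow> lt y z \<longrightarrow> lt x z) \<and>
     (\<forall>x\<in>S. \<forall>y\<in>S. x \<noteq> y \<longrightarrow> lt x y \<or> lt y x) \<and>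
     (\<forall>x\<in>S. \<forall>y\<in>S. \<forall>z\<in>S. lt x y \<longrightarrow> lt (x + z) (y + z)) \<and>
     (\<forall>x\<in>S. x \<noteq> 0 \<longrightarrow> lt 0 x)"

definition sparse_less :: "('n::finite \<Rightarrow> real) set \<Rightarrow> (('n \<Rightarrow> int) \<Rightarrow> ('n \<Rightarrow> int) \<Rightarrow> bool)
    \<Rightarrow> ('n \<Rightarrow> int) \<Rightarrow> ('n \<Rightarrow> int) \<Rightarrow> bool" where
  "sparse_less M lt s r \<longleftrightarrow> adeg M s < adeg M r \<or> (adeg M s = adeg M r \<and> lt s r)"

definition gsparse_less :: "('n::finite \<Rightarrow> real) set \<Rightarrow> (('n \<Rightarrow> int) \<Rightarrow> ('n \<Rightarrow> int) \<Rightarrow> bool)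
    \<Rightarrow> ('n \<Rightarrow> int) \<times> int \<Rightarrow> ('n \<Rightarrow> int) \<times> int \<Rightarrow> bool" where
  "gsparse_less M lt a b \<longleftrightarrow> snd a < snd b \<or> (snd a = snd b \<and> sparse_less M lt (fst a) (fst b))"

definition lm :: "('a \<Rightarrow> 'a \<Rightarrow> bool) \<Rightarrow> ('a \<Rightarrow>\<^sub>0 'k::zero) \<Rightarrow> 'a" where
  "lm lt f = (THE m. m \<in> Poly_Mapping.keys f \<and> (\<forall>m'\<in>Poly_Mapping.keys f. m' \<noteq> m \<longrightarrow> lt m' m))"

definition ddvd :: "('n::finite \<Rightarrow> real) set \<Rightarrow> ('k::{comm_ring_1} itself)
    \<Rightarrow> ('n \<Rightarrow> int) \<times> int \<Rightarrow> ('n \<Rightarrow> int) \<times> int \<Rightarrow> bool" where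
  "ddvd M K a b \<longleftrightarrow> (\<exists>c\<in>SMh M. a + c = b \<and>
      sdeg M (mon a :: _ \<Rightarrow>\<^sub>0 'k) + sdeg M (mon c :: _ \<Rightarrow>\<^sub>0 'k) = sdeg M (mon b :: _ \<Rightarrow>\<^sub>0 'k))"

definition sparse_GB :: "('n::finite \<Rightarrow> real) set \<Rightarrow> (('n \<Rightarrow> int) \<Rightarrow> ('n \<Rightarrow> int) \<Rightarrow> bool)
    \<Rightarrow> (('n \<Rightarrow> int) \<times> int \<Rightarrow>\<^sub>0 'k::comm_ring_1) set \<Rightarrow> (('n \<Rightarrow> int) \<times> int \<Rightarrow>\<^sub>0 'k) set \<Rightarrow> bool" where
  "sparse_GB M lt I G \<longleftrightarrow> G \<subseteq> I \<and> ideal_gen (SMh M) G = I \<and>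
     (\<forall>f\<in>I. f \<noteq> 0 \<longrightarrow> (\<exists>g\<in>G. g \<noteq> 0 \<and>
        ddvd M TYPE('k) (lm (gsparse_less M lt) g) (lm (gsparse_less M lt) f)))"

definition macaulay :: "'a list \<Rightarrow> ('a \<Rightarrow>\<^sub>0 'k::zero) list \<Rightarrow> 'k mat" where
  "macaulay cs rs = mat (length rs) (length cs) (\<lambda>(i, j). Poly_Mapping.lookup (rs ! i) (cs ! j))"

definition row_poly :: "'a list \<Rightarrow> 'k::comm_monoid_add mat \<Rightarrow> nat \<Rightarrow> ('a \<Rightarrow>\<^sub>0 'k)" where
  "row_poly cs A i = (\<Sum>j<length cs. Poly_Mapping.single (cs ! j) (A $$ (i, j)))"

definition Rows :: "'a list \<Rightarrow> 'k::comm_monoid_add mat \<Rightarrow> ('a \<Rightarrow>\<^sub>0 'k) set" where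
  "Rows cs A = {row_poly cs A i | i. i < dim_row A} - {0}"

definition rref :: "'k::field mat \<Rightarrow> 'k mat" where
  "rref A = gauss_jordan_single A"

definition ref :: "'k::field mat \<Rightarrow> bool" where
  "ref A \<longleftrightarrow> (\<exists>f. \<forall>i < dim_row A. f i \<le> dim_col A \<and> (\<forall>j < f i. A $$ (i, j) = 0) \<and>
      (f i < dim_col A \<longrightarrow> A $$ (i, f i) \<noteq> 0) \<and>
      (Suc i < dim_row A \<longrightarrow> f i < f (Suc i) \<or> f (Suc i) = dim_col A))"

definition rows_indep :: "'k::field mat \<Rightarrow> bool" where
  "rows_indep A \<longleftrightarrow> (\<forall>c. (\<forall>j < dim_col A. (\<Sum>i<dim_row A. c i * A $$ (i, j)) = 0)
      \<longrightarrow> (\<forall>i < dim_row A. c i = 0))"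

definition cols_indep :: "'k::field mat \<Rightarrow> bool" where
  "cols_indep A \<longleftrightarrow> (\<forall>c. (\<forall>i < dim_row A. (\<Sum>j<dim_col A. c j * A $$ (i, j)) = 0)
      \<longrightarrow> (\<forall>j < dim_col A. c j = 0))"

text \<open>Full rank: rank = min(#rows, #cs), i.e. rows or columns linearly independent.\<close>
definition full_rank :: "'k::field mat \<Rightarrow> bool" where
  "full_rank A \<longleftrightarrow> rows_indep A \<or> cols_indep A"

end

theory Submission
  imports Defs "Jordan_Normal_Form.VS_Connect"
begin

text \<open>Multiplying by \<open>X\<^sup>t\<close> along \<open>\<delta>\<close>-divisibility is monotone for the graded sparse
  order, because the affine degree, merely subadditive in general, is additive there. Hence the
  row \<open>X\<^sup>t g\<close> of \<open>\<M>'\<^sub>D\<close> attached to \<open>X\<^bsup>(s,D)\<^esup>\<close> has leading monomial exactly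
  \<open>X\<^bsup>(s,D)\<^esup>\<close>: the rows have distinct leading columns, so \<open>\<M>'\<^sub>D\<close> has full rank and,
  sorted by leading column, is in row echelon form. Every row of \<open>\<M>\<^sub>D\<close> lies in \<open>I\<^sup>h\<close>,
  and the leading monomial of a nonzero element of \<open>I\<^sup>h\<close> of degree \<open>D\<close> is
  \<open>\<delta>\<close>-divisible by some \<open>LM(g)\<close>, so Gaussian elimination by the rows of \<open>\<M>'\<^sub>D\<close> reduces it
  to zero. The two matrices therefore have the same row space, and the nonzero rows of a reduced
  row echelon form depend only on the row space.\<close>

section \<open>Row spaces and reduced row echelon forms\<close>

abbreviation row_space :: "nat \<Rightarrow> 'a::field mat \<Rightarrow> 'a vec set" where
  "row_space \<equiv> vec_space.row_space"

lemma row_space_iff: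
  assumes A: "A \<in> carrier_mat nr n"
  shows "v \<in> row_space n A \<longleftrightarrow> (\<exists>c. v = vec n (\<lambda>j. \<Sum>i<nr. c i * A $$ (i, j)))"
proof -
  have transpose_mult: "A\<^sup>T *\<^sub>v y = vec n (\<lambda>j. \<Sum>i<nr. y $ i * A $$ (i, j))"
    if "y \<in> carrier_vec nr" for y
    using A that by (intro eq_vecI) (auto simp: scalar_prod_def atLeast0LessThan mult.commute)
  show ?thesis
  proof
    assume "v \<in> row_space n A"
    then obtain y where "y \<in> carrier_vec nr" "v = A\<^sup>T *\<^sub>v y"
      using A by (auto simp: vec_space.row_space_eq[OF A])
    then show "\<exists>c. v = vec n (\<lambda>j. \<Sum>i<nr. c i * A $$ (i, j))"
      by (auto simp: transpose_mult)
  next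
    assume "\<exists>c. v = vec n (\<lambda>j. \<Sum>i<nr. c i * A $$ (i, j))"
    then obtain c where v: "v = vec n (\<lambda>j. \<Sum>i<nr. c i * A $$ (i, j))" ..
    have "v = A\<^sup>T *\<^sub>v vec nr c"
      unfolding v transpose_mult[OF vec_carrier] by (intro eq_vecI sum.cong) auto
    then show "v \<in> row_space n A"
      using A by (auto simp: vec_space.row_space_eq[OF A])
  qed
qed

lemma row_space_carrier: "A \<in> carrier_mat nr n \<Longrightarrow> v \<in> row_space n A \<Longrightarrow> v \<in> carrier_vec n"
  by (auto simp: row_space_iff)

lemma zero_in_row_space: "A \<in> carrier_mat nr n \<Longrightarrow> 0\<^sub>v n \<in> row_space n A"
  by (auto simp: row_space_iff intro!: exI[of _ "\<lambda>_. 0"])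

lemma row_in_row_space:
  assumes A: "A \<in> carrier_mat nr n" and i: "i < nr"
  shows "row A i \<in> row_space n A"
proof -
  have "row A i = vec n (\<lambda>j. \<Sum>l<nr. of_bool (l = i) * A $$ (l, j))"
    using A i by (auto simp: of_bool_def if_distrib[of "\<lambda>x. x * _"] cong: if_cong)
  then show ?thesis
    unfolding row_space_iff[OF A] by (intro exI[of _ "\<lambda>l. of_bool (l = i)"])
qed

lemma row_space_add:
  assumes A: "A \<in> carrier_mat nr n" and "v \<in> row_space n A" "w \<in> row_space n A"
  shows "v + w \<in> row_space n A"
proof -
  obtain c d where "v = vec n (\<lambda>j. \<Sum>i<nr. c i * A $$ (i, j))" "w = vec n (\<lambda>j. \<Sum>i<nr. d i * A $$ (i, j))"
    using assms by (auto simp: row_space_iff)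
  then have "v + w = vec n (\<lambda>j. \<Sum>i<nr. (c i + d i) * A $$ (i, j))"
    by (auto simp: distrib_right sum.distrib)
  then show ?thesis
    using A by (auto simp: row_space_iff)
qed

lemma row_space_smult:
  assumes A: "A \<in> carrier_mat nr n" and "v \<in> row_space n A"
  shows "a \<cdot>\<^sub>v v \<in> row_space n A"
proof -
  obtain c where "v = vec n (\<lambda>j. \<Sum>i<nr. c i * A $$ (i, j))"
    using assms by (auto simp: row_space_iff)
  then have "a \<cdot>\<^sub>v v = vec n (\<lambda>j. \<Sum>i<nr. (a * c i) * A $$ (i, j))"
    by (auto simp: sum_distrib_left mult.assoc)
  then show ?thesis
    using A by (auto simp: row_space_iff)
qed

lemma row_space_diff:
  assumes A: "A \<in> carrier_mat nr n" and "v \<in> row_space n A" "w \<in> row_space n A"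
  shows "v - w \<in> row_space n A"
proof -
  obtain c d where "v = vec n (\<lambda>j. \<Sum>i<nr. c i * A $$ (i, j))" "w = vec n (\<lambda>j. \<Sum>i<nr. d i * A $$ (i, j))"
    using assms by (auto simp: row_space_iff)
  then have "v - w = vec n (\<lambda>j. \<Sum>i<nr. (c i - d i) * A $$ (i, j))"
    by (auto simp: left_diff_distrib sum_subtractf)
  then show ?thesis
    using A by (auto simp: row_space_iff)
qed

lemma row_space_subsetI:
  assumes A: "A \<in> carrier_mat nr n" and B: "B \<in> carrier_mat nr' n"
    and rows: "\<And>i. i < nr \<Longrightarrow> row A i \<in> row_space n B"
  shows "row_space n A \<subseteq> row_space n B"
proof -
  interpret vec_space "TYPE('a)" n .
  show ?thesis
    using A B rows unfolding row_space_def by (intro span_subsetI) (auto simp: rows_def)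
qed

lemma row_space_rref:
  assumes A: "A \<in> carrier_mat nr n"
  shows "rref A \<in> carrier_mat nr n" "row_space n (rref A) = row_space n A"
    "\<exists>f. pivot_fun (rref A) f n"
proof -
  note gj = gauss_jordan_single[OF A refl]
  show carrier: "rref A \<in> carrier_mat nr n"
    using gj(2) unfolding rref_def .
  show "\<exists>f. pivot_fun (rref A) f n"
    using gj(3) carrier unfolding rref_def row_echelon_form_def by auto
  obtain P Q where PQ: "rref A = P * A" "P \<in> carrier_mat nr nr" "Q \<in> carrier_mat nr nr"
    "P * Q = 1\<^sub>m nr" "Q * P = 1\<^sub>m nr"
    using gj(4) unfolding rref_def by blast
  have "invertible_mat P"
    using PQ unfolding invertible_mat_def inverts_mat_def by auto
  then show "row_space n (rref A) = row_space n A"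
    unfolding PQ(1) using vec_space.row_space_is_preserved PQ(2) A by blast
qed

definition pivot_cols :: "nat \<Rightarrow> 'a::zero vec set \<Rightarrow> nat set" where
  "pivot_cols n V = {j. j < n \<and> (\<exists>v\<in>V. v $ j \<noteq> 0 \<and> (\<forall>l<j. v $ l = 0))}"

lemma leading_entry_unique:
  assumes "v $ j \<noteq> 0" "\<forall>l<j. v $ l = 0" "v $ j' \<noteq> 0" "\<forall>l<j'. v $ l = 0"
  shows "j = j'"
  using assms by (metis linorder_neqE_nat)

text \<open>The leading entry comes from the row with the leftmost pivot among the rows occurring
  with nonzero coefficient.\<close>
lemma row_space_leading_pivot:
  assumes C: "C \<in> carrier_mat nr n" and f: "pivot_fun C f n"
    and v: "v \<in> row_space n C" "v \<noteq> 0\<^sub>v n"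
  shows "\<exists>i<nr. f i < n \<and> v $ f i \<noteq> 0 \<and> (\<forall>l<f i. v $ l = 0)"
proof -
  note pivot = pivot_funD[OF carrier_matD(1)[OF C] f]
  obtain c where vc: "v = vec n (\<lambda>j. \<Sum>i<nr. c i * C $$ (i, j))"
    using v(1) row_space_iff[OF C] by blast
  define S where "S = {i. i < nr \<and> c i \<noteq> 0 \<and> f i < n}"
  have vanish: "c i * C $$ (i, j) = 0" if "i < nr" "j < n" "i \<notin> S \<or> j < f i" for i j
  proof (cases "c i = 0")
    case False
    with that have "j < f i"
      using pivot(1)[OF that(1)] unfolding S_def by auto
    then show ?thesis
      using pivot(2)[OF that(1)] by simp
  qed simp
  have "S \<noteq> {}"
  proof
    assume "S = {}"
    then have "v = 0\<^sub>v n"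
      unfolding vc by (intro eq_vecI) (auto intro!: sum.neutral vanish)
    with v(2) show False ..
  qed
  then obtain i0 where i0: "i0 \<in> S" and least: "\<And>i. i \<in> S \<Longrightarrow> f i0 \<le> f i"
    using ex_has_least_nat[of "\<lambda>i. i \<in> S" _ f] by blast
  then have i0_props: "i0 < nr" "c i0 \<noteq> 0" "f i0 < n"
    unfolding S_def by auto
  have "v $ f i0 = c i0 * C $$ (i0, f i0)"
    unfolding vc using i0_props pivot(5)[OF i0_props(1,3)]
    by (simp add: sum.remove[of _ i0] vanish sum.neutral)
  also have "\<dots> = c i0"
    using pivot(4)[OF i0_props(1,3)] by simp
  finally have "v $ f i0 \<noteq> 0"
    using i0_props by simp
  moreover have "v $ l = 0" if "l < f i0" for l
    unfolding vc using that i0_props least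
    by (auto intro!: sum.neutral vanish) (meson le_less_trans not_less)
  ultimately show ?thesis
    using i0_props by blast
qed

lemma pivot_cols_row_space:
  assumes C: "C \<in> carrier_mat nr n" and f: "pivot_fun C f n"
  shows "pivot_cols n (row_space n C) = f ` {i. i < nr \<and> f i < n}"
proof
  note pivot = pivot_funD[OF carrier_matD(1)[OF C] f]
  show "pivot_cols n (row_space n C) \<subseteq> f ` {i. i < nr \<and> f i < n}"
  proof
    fix j
    assume "j \<in> pivot_cols n (row_space n C)"
    then obtain v where j: "j < n" and v: "v \<in> row_space n C" "v $ j \<noteq> 0" "\<forall>l<j. v $ l = 0"
      unfolding pivot_cols_def by blast
    then have "v \<noteq> 0\<^sub>v n"
      by auto
    then obtain i where "i < nr" "f i < n" "v $ f i \<noteq> 0" "\<forall>l<f i. v $ l = 0"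
      using row_space_leading_pivot[OF C f v(1)] by blast
    with v show "j \<in> f ` {i. i < nr \<and> f i < n}"
      using leading_entry_unique[of v j "f i"] by blast
  qed
  show "f ` {i. i < nr \<and> f i < n} \<subseteq> pivot_cols n (row_space n C)"
  proof safe
    fix i
    assume i: "i < nr" "f i < n"
    then have "row C i $ f i \<noteq> 0" "\<forall>l<f i. row C i $ l = 0"
      using C pivot(2,4)[OF i(1)] by auto
    then show "f i \<in> pivot_cols n (row_space n C)"
      unfolding pivot_cols_def using i row_in_row_space[OF C i(1)] by blast
  qed
qed

definition pivot_unit_vecs :: "nat \<Rightarrow> 'a::{zero,one} vec set \<Rightarrow> 'a vec set" where
  "pivot_unit_vecs n V =
    {v \<in> V. \<exists>p\<in>pivot_cols n V. v $ p = 1 \<and> (\<forall>q\<in>pivot_cols n V. q \<noteq> p \<longrightarrow> v $ q = 0)}"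

lemma row_at_pivot:
  assumes C: "C \<in> carrier_mat nr n" and f: "pivot_fun C f n"
    and "i < nr" "i' < nr" "f i' < n"
  shows "row C i $ f i' = (if i' = i then 1 else 0)"
  using assms pivot_funD(4,5)[OF carrier_matD(1)[OF C] f] by auto

lemma nonzero_rows_subset_pivot_unit_vecs:
  assumes C: "C \<in> carrier_mat nr n" and f: "pivot_fun C f n"
  shows "set (rows C) - {0\<^sub>v n} \<subseteq> pivot_unit_vecs n (row_space n C)"
proof
  fix v
  assume "v \<in> set (rows C) - {0\<^sub>v n}"
  then obtain i where i: "i < nr" "v = row C i" "v \<noteq> 0\<^sub>v n"
    using C by (auto simp: rows_def)
  have "f i < n"
  proof (rule ccontr)
    assume "\<not> f i < n"
    then have "v = 0\<^sub>v n"
      using i C pivot_funD(2)[OF carrier_matD(1)[OF C] f i(1)] by (intro eq_vecI) auto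
    with i(3) show False ..
  qed
  then show "v \<in> pivot_unit_vecs n (row_space n C)"
    unfolding pivot_unit_vecs_def pivot_cols_row_space[OF C f]
  proof (intro CollectI conjI bexI[of _ "f i"])
    show "v \<in> row_space n C"
      using i row_in_row_space[OF C] by simp
    show "f i \<in> f ` {i. i < nr \<and> f i < n}" "v $ f i = 1"
      using i row_at_pivot[OF C f i(1) i(1)] \<open>f i < n\<close> by auto
    show "\<forall>q\<in>f ` {i. i < nr \<and> f i < n}. q \<noteq> f i \<longrightarrow> v $ q = 0"
      using i row_at_pivot[OF C f i(1)] by auto
  qed
qed

lemma row_space_eq_zeroI:
  assumes C: "C \<in> carrier_mat nr n" and f: "pivot_fun C f n" and w: "w \<in> row_space n C"
    and pivots: "\<And>i. i < nr \<Longrightarrow> f i < n \<Longrightarrow> w $ f i = 0"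
  shows "w = 0\<^sub>v n"
proof (rule ccontr)
  assume "w \<noteq> 0\<^sub>v n"
  then obtain i where "i < nr" "f i < n" "w $ f i \<noteq> 0"
    using row_space_leading_pivot[OF C f w] by blast
  with pivots show False
    by blast
qed

lemma pivot_unit_vecs_subset_rows:
  assumes C: "C \<in> carrier_mat nr n" and f: "pivot_fun C f n"
  shows "pivot_unit_vecs n (row_space n C) \<subseteq> set (rows C) - {0\<^sub>v n}"
proof
  fix v
  assume "v \<in> pivot_unit_vecs n (row_space n C)"
  then obtain i where v: "v \<in> row_space n C" and i: "i < nr" "f i < n" "v $ f i = 1"
    and others: "\<And>i'. i' < nr \<Longrightarrow> f i' < n \<Longrightarrow> f i' \<noteq> f i \<Longrightarrow> v $ f i' = 0"
    unfolding pivot_unit_vecs_def pivot_cols_row_space[OF C f] by blast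
  have v_carrier: "v \<in> carrier_vec n"
    using v row_space_carrier[OF C] by blast
  have "v - row C i = 0\<^sub>v n"
  proof (rule row_space_eq_zeroI[OF C f])
    show "v - row C i \<in> row_space n C"
      using v row_in_row_space[OF C i(1)] by (rule row_space_diff[OF C])
    fix i'
    assume i': "i' < nr" "f i' < n"
    have "v $ f i' = row C i $ f i'"
    proof (cases "i' = i")
      case False
      then have "f i' \<noteq> f i"
        using row_at_pivot[OF C f i(1) i'] row_at_pivot[OF C f i(1) i(1,2)] by auto
      then show ?thesis
        using others[OF i'] row_at_pivot[OF C f i(1) i'] False by simp
    qed (use i row_at_pivot[OF C f i(1) i(1,2)] in simp)
    then show "(v - row C i) $ f i' = 0"
      using i' v_carrier C by simp
  qed
  have "v $ j = row C i $ j" if "j < n" for j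
  proof -
    have "(v - row C i) $ j = 0"
      using \<open>v - row C i = 0\<^sub>v n\<close> that by simp
    then show ?thesis
      using that v_carrier C by simp
  qed
  then have "v = row C i"
    using v_carrier C by (intro eq_vecI) auto
  then have "v \<in> set (rows C)"
    using i(1) C by (simp add: rows_def)
  moreover have "v \<noteq> 0\<^sub>v n"
    using i(2,3) by auto
  ultimately show "v \<in> set (rows C) - {0\<^sub>v n}"
    by blast
qed

lemma nonzero_rows_eq_pivot_unit_vecs:
  assumes "C \<in> carrier_mat nr n" "pivot_fun C f n"
  shows "set (rows C) - {0\<^sub>v n} = pivot_unit_vecs n (row_space n C)"
  using nonzero_rows_subset_pivot_unit_vecs[OF assms] pivot_unit_vecs_subset_rows[OF assms]
  by (rule equalityI)

theorem rref_nonzero_rows_eq: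
  assumes A: "A \<in> carrier_mat nr n" and B: "B \<in> carrier_mat nr' n"
    and eq: "row_space n A = row_space n B"
  shows "set (rows (rref A)) - {0\<^sub>v n} = set (rows (rref B)) - {0\<^sub>v n}"
proof -
  obtain f g where f: "pivot_fun (rref A) f n" and g: "pivot_fun (rref B) g n"
    using row_space_rref(3)[OF A] row_space_rref(3)[OF B] by blast
  show ?thesis
    unfolding nonzero_rows_eq_pivot_unit_vecs[OF row_space_rref(1)[OF A] f]
      nonzero_rows_eq_pivot_unit_vecs[OF row_space_rref(1)[OF B] g]
      row_space_rref(2)[OF A] row_space_rref(2)[OF B] eq ..
qed

lemma subset_row_space_by_elimination:
  assumes A: "A \<in> carrier_mat nr n" and W: "W \<subseteq> carrier_vec n"
    and elim: "\<And>w j. w \<in> W \<Longrightarrow> j < n \<Longrightarrow> w $ j \<noteq> 0 \<Longrightarrow> \<forall>l<j. w $ l = 0 \<Longrightarrow>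
      \<exists>v\<in>row_space n A. v $ j \<noteq> 0 \<and> (\<forall>l<j. v $ l = 0) \<and> w - (w $ j / v $ j) \<cdot>\<^sub>v v \<in> W"
  shows "W \<subseteq> row_space n A"
proof -
  have "\<forall>w\<in>W. (\<forall>l<j. w $ l = 0) \<longrightarrow> w \<in> row_space n A" if "j \<le> n" for j
    using that
  proof (induction j rule: inc_induct)
    case base
    have "w = 0\<^sub>v n" if "w \<in> W" "\<forall>l<n. w $ l = 0" for w
      using that W by (intro eq_vecI) auto
    then show ?case
      using zero_in_row_space[OF A] by auto
  next
    case (step j)
    show ?case
    proof (intro ballI impI)
      fix w
      assume w: "w \<in> W" and zeros: "\<forall>l<j. w $ l = 0"
      show "w \<in> row_space n A"
      proof (cases "w $ j = 0")
        case True
        with zeros have "\<forall>l<Suc j. w $ l = 0"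
          using less_Suc_eq by auto
        with step.IH w show ?thesis
          by blast
      next
        case False
        obtain v where v: "v \<in> row_space n A" "v $ j \<noteq> 0" "\<forall>l<j. v $ l = 0"
          and reduced: "w - (w $ j / v $ j) \<cdot>\<^sub>v v \<in> W"
          using elim[OF w step.hyps(2) False zeros] by blast
        define c where "c = w $ j / v $ j"
        have v_carrier: "v \<in> carrier_vec n"
          using row_space_carrier[OF A v(1)] .
        have "(w - c \<cdot>\<^sub>v v) $ l = 0" if "l < Suc j" for l
          using that zeros v(2,3) v_carrier step.hyps(2) by (auto simp: c_def less_Suc_eq)
        with step.IH reduced have "w - c \<cdot>\<^sub>v v \<in> row_space n A"
          unfolding c_def by blast
        then have "w - c \<cdot>\<^sub>v v + c \<cdot>\<^sub>v v \<in> row_space n A"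
          by (intro row_space_add[OF A] row_space_smult[OF A] v(1))
        moreover have "w - c \<cdot>\<^sub>v v + c \<cdot>\<^sub>v v = w"
          using w W v_carrier by (intro eq_vecI) auto
        ultimately show ?thesis
          by simp
      qed
    qed
  qed
  from this[of 0] show ?thesis
    by auto
qed

lemma rows_indep_leading_cols:
  assumes lead: "\<And>i. i < dim_row A \<Longrightarrow> p i < dim_col A \<and> A $$ (i, p i) \<noteq> 0 \<and> (\<forall>j<p i. A $$ (i, j) = 0)"
    and inj: "inj_on p {..<dim_row A}"
  shows "rows_indep A"
  unfolding rows_indep_def
proof (intro allI impI)
  fix c i
  assume comb: "\<forall>j<dim_col A. (\<Sum>i<dim_row A. c i * A $$ (i, j)) = 0" and i: "i < dim_row A"
  show "c i = 0"
  proof (rule ccontr)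
    assume "c i \<noteq> 0"
    define S where "S = {i. i < dim_row A \<and> c i \<noteq> 0}"
    obtain i0 where i0: "i0 \<in> S" and least: "\<And>i. i \<in> S \<Longrightarrow> p i0 \<le> p i"
      using ex_has_least_nat[of "\<lambda>i. i \<in> S" i p] i \<open>c i \<noteq> 0\<close> unfolding S_def by blast
    have i0_props: "i0 < dim_row A" "c i0 \<noteq> 0"
      using i0 unfolding S_def by auto
    have "c l * A $$ (l, p i0) = 0" if "l < dim_row A" "l \<noteq> i0" for l
    proof (cases "c l = 0")
      case False
      with that(1) have "p i0 \<le> p l"
        by (intro least) (simp add: S_def)
      moreover have "p l \<noteq> p i0"
        using inj that i0_props(1) unfolding inj_on_def by blast
      ultimately have "p i0 < p l"
        by simp
      then show ?thesis
        using lead[OF that(1)] by simp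
    qed simp
    then have "(\<Sum>l<dim_row A. c l * A $$ (l, p i0)) = c i0 * A $$ (i0, p i0)"
      using i0_props by (simp add: sum.remove[of _ i0] sum.neutral)
    moreover have "c i0 * A $$ (i0, p i0) \<noteq> 0"
      using lead[OF i0_props(1)] i0_props by simp
    ultimately show False
      using comb lead[OF i0_props(1)] by simp
  qed
qed

lemma ref_leading_cols:
  assumes "\<And>i. i < dim_row A \<Longrightarrow> p i < dim_col A \<and> A $$ (i, p i) \<noteq> 0 \<and> (\<forall>j<p i. A $$ (i, j) = 0)"
    and "\<And>i. Suc i < dim_row A \<Longrightarrow> p i < p (Suc i)"
  shows "ref A"
  unfolding ref_def using assms by (intro exI[of _ p]) (auto simp: less_imp_le)

lemma lookup_single_mult:
  fixes f :: "'a::ab_group_add \<Rightarrow>\<^sub>0 'k::comm_semiring_1"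
  shows "Poly_Mapping.lookup (Poly_Mapping.single t c * f) x = c * Poly_Mapping.lookup f (x - t)"
proof -
  define S where "S l = (\<Sum>q. Poly_Mapping.lookup f q when x = l + q)" for l
  have "Poly_Mapping.lookup (Poly_Mapping.single t c * f) x
      = (\<Sum>l. Poly_Mapping.lookup (Poly_Mapping.single t c) l * S l)"
    unfolding S_def by (rule lookup_mult)
  also have "\<dots> = (\<Sum>l. c * S t when l = t)"
    by (intro Sum_any.cong) (auto simp: lookup_single when_def)
  also have "\<dots> = c * S t"
    by simp
  also have "S t = (\<Sum>q. Poly_Mapping.lookup f q when q = x - t)"
    unfolding S_def by (intro Sum_any.cong) (auto simp: when_def algebra_simps)
  finally show ?thesis
    by simp
qed

lemma lookup_mon_mult:
  "Poly_Mapping.lookup (mon t * f) x = Poly_Mapping.lookup (f :: 'a::ab_group_add \<Rightarrow>\<^sub>0 'k::comm_semiring_1) (x - t)"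
  unfolding mon_def by (simp add: lookup_single_mult)

lemma keys_mon_mult:
  "Poly_Mapping.keys (mon t * f) = (+) t ` Poly_Mapping.keys (f :: 'a::ab_group_add \<Rightarrow>\<^sub>0 'k::comm_semiring_1)"
proof (rule Set.set_eqI)
  fix x
  have "x \<in> Poly_Mapping.keys (mon t * f) \<longleftrightarrow> x - t \<in> Poly_Mapping.keys f"
    by (simp add: in_keys_iff lookup_mon_mult)
  also have "\<dots> \<longleftrightarrow> x \<in> (+) t ` Poly_Mapping.keys f"
    by (metis (no_types, lifting) add_diff_cancel_left' diff_add_cancel add.commute image_iff)
  finally show "x \<in> Poly_Mapping.keys (mon t * f) \<longleftrightarrow> x \<in> (+) t ` Poly_Mapping.keys f" .
qed

lemma keys_smult_subset:
  "Poly_Mapping.keys (Poly_Mapping.single 0 c * f) \<subseteq> Poly_Mapping.keys (f :: 'a::ab_group_add \<Rightarrow>\<^sub>0 'k::comm_semiring_1)"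
  by (auto simp: in_keys_iff lookup_single_mult)

definition coeff_vec :: "'a list \<Rightarrow> ('a \<Rightarrow>\<^sub>0 'k::zero) \<Rightarrow> 'k vec" where
  "coeff_vec cs f = vec (length cs) (\<lambda>j. Poly_Mapping.lookup f (cs ! j))"

lemma macaulay_carrier: "macaulay cs rs \<in> carrier_mat (length rs) (length cs)"
  by (simp add: macaulay_def)

lemma row_macaulay: "i < length rs \<Longrightarrow> row (macaulay cs rs) i = coeff_vec cs (rs ! i)"
  by (auto simp: macaulay_def coeff_vec_def)

lemma coeff_vec_diff_smult:
  "coeff_vec cs (f - Poly_Mapping.single 0 c * g) = coeff_vec cs f - c \<cdot>\<^sub>v coeff_vec cs (g :: 'a::ab_group_add \<Rightarrow>\<^sub>0 'k::comm_ring_1)"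
  unfolding coeff_vec_def by (intro eq_vecI) (simp_all add: lookup_minus lookup_single_mult)

lemma Rows_eqI:
  assumes "dim_col C = length cs" "dim_col C' = length cs"
    and "set (rows C) - {0\<^sub>v (length cs)} = set (rows C') - {0\<^sub>v (length cs)}"
  shows "Rows cs C = Rows cs C'"
proof -
  define poly where "poly v = (\<Sum>j<length cs. Poly_Mapping.single (cs ! j) (v $ j))" for v :: "'a vec"
  have "Rows cs C = poly ` (set (rows C) - {0\<^sub>v (length cs)}) - {0}"
    if "dim_col C = length cs" for C :: "'a mat"
  proof -
    have "row_poly cs C i = poly (row C i)" if "i < dim_row C" for i
      unfolding row_poly_def poly_def using that \<open>dim_col C = length cs\<close> by simp
    then have "{row_poly cs C i | i. i < dim_row C} = (\<lambda>i. poly (row C i)) ` {..<dim_row C}"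
      by (auto simp: image_iff) metis
    also have "\<dots> = poly ` set (rows C)"
      by (auto simp: rows_def image_image atLeast0LessThan)
    finally have "{row_poly cs C i | i. i < dim_row C} = poly ` set (rows C)" .
    moreover have "poly (0\<^sub>v (length cs)) = 0"
      unfolding poly_def by simp
    ultimately show ?thesis
      unfolding Rows_def by auto
  qed
  with assms show ?thesis
    by metis
qed

section \<open>Affine degree, the graded sparse order and leading monomials\<close>

lemma gen_sg_add: "x \<in> gen_sg A \<Longrightarrow> y \<in> gen_sg A \<Longrightarrow> x + y \<in> gen_sg A"
  by (induction x rule: gen_sg.induct) (auto simp: add.assoc intro: gen_sg.add)

lemma SMh_add: "x \<in> SMh M \<Longrightarrow> y \<in> SMh M \<Longrightarrow> x + y \<in> SMh M"
  unfolding SMh_def by (rule gen_sg_add)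

lemma zero_in_SMh: "0 \<in> SMh M"
  unfolding SMh_def by (rule gen_sg.zero)

lemma fst_SMh: "k \<in> SMh M \<Longrightarrow> fst k \<in> SM M"
  unfolding SMh_def SM_def
proof (induction k rule: gen_sg.induct)
  case zero
  show ?case
    by (metis fst_zero gen_sg.zero)
next
  case (add a x)
  then obtain s where "s \<in> lattice_pts M" "a = (s, 1)"
    by blast
  with add.IH show ?case
    by (metis fst_add fst_conv gen_sg.add)
qed

lemma snd_SMh_nonneg: "k \<in> SMh M \<Longrightarrow> 0 \<le> snd k"
  unfolding SMh_def by (induction k rule: gen_sg.induct) auto

lemma adeg_in_SMh:
  assumes "k \<in> SMh M"
  shows "(fst k, int (adeg M (fst k))) \<in> SMh M"
proof -
  have "(fst k, int (nat (snd k))) \<in> SMh M"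
    using assms snd_SMh_nonneg[OF assms] by simp
  then show ?thesis
    unfolding adeg_def by (rule LeastI)
qed

lemma adeg_add_le:
  assumes "a \<in> SMh M" "b \<in> SMh M"
  shows "adeg M (fst a + fst b) \<le> adeg M (fst a) + adeg M (fst b)"
proof -
  have "(fst a, int (adeg M (fst a))) + (fst b, int (adeg M (fst b))) \<in> SMh M"
    using assms by (intro SMh_add adeg_in_SMh)
  then show ?thesis
    unfolding adeg_def[of M "fst a + fst b"] by (intro Least_le) simp
qed

lemma sdeg_mon: "sdeg M (mon x :: _ \<Rightarrow>\<^sub>0 'k::{comm_monoid_add,zero_neq_one}) = adeg M (fst x)"
  by (simp add: sdeg_def adeg_poly_def chi_def mon_def)

lemma ddvd_iff:
  "ddvd M TYPE('k::comm_ring_1) a b \<longleftrightarrow>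
    b - a \<in> SMh M \<and> adeg M (fst a) + adeg M (fst (b - a)) = adeg M (fst b)"
proof -
  have "a + c = b \<longleftrightarrow> c = b - a" for c
    by (auto simp: algebra_simps)
  then show ?thesis
    unfolding ddvd_def sdeg_mon by (auto simp: add.commute)
qed

lemma the_ddvd_cofactor:
  assumes "ddvd M TYPE('k::comm_ring_1) a b"
  shows "(THE t. t \<in> SMh M \<and> t + a = b \<and>
      sdeg M (mon t :: _ \<Rightarrow>\<^sub>0 'k) + sdeg M (mon a :: _ \<Rightarrow>\<^sub>0 'k) = sdeg M (mon b :: _ \<Rightarrow>\<^sub>0 'k)) = b - a"
  using assms by (intro the_equality) (auto simp: ddvd_iff sdeg_mon algebra_simps)

lemma gsparse_less_strict_linear:
  assumes "monomial_order (SM M) lt"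
  shows "asymp_on (SMh M) (gsparse_less M lt)" "transp_on (SMh M) (gsparse_less M lt)"
    "totalp_on (SMh M) (gsparse_less M lt)"
proof -
  have irrefl: "\<not> lt x x" if "x \<in> SM M" for x
    using assms that unfolding monomial_order_def by blast
  have trans: "lt x z" if "x \<in> SM M" "y \<in> SM M" "z \<in> SM M" "lt x y" "lt y z" for x y z
    using assms that unfolding monomial_order_def by blast
  have total: "lt x y \<or> lt y x" if "x \<in> SM M" "y \<in> SM M" "x \<noteq> y" for x y
    using assms that unfolding monomial_order_def by blast
  show "asymp_on (SMh M) (gsparse_less M lt)"
  proof (rule asymp_onI)
    fix a b
    assume a: "a \<in> SMh M" and b: "b \<in> SMh M" and "gsparse_less M lt a b"
    then show "\<not> gsparse_less M lt b a"
      using irrefl[of "fst a"] trans[of "fst a" "fst b" "fst a"] fst_SMh[OF a] fst_SMh[OF b]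
      unfolding gsparse_less_def sparse_less_def by auto
  qed
  show "transp_on (SMh M) (gsparse_less M lt)"
  proof (rule transp_onI)
    fix a b c
    assume a: "a \<in> SMh M" and b: "b \<in> SMh M" and c: "c \<in> SMh M"
      and "gsparse_less M lt a b" "gsparse_less M lt b c"
    then show "gsparse_less M lt a c"
      using trans[of "fst a" "fst b" "fst c"] fst_SMh[OF a] fst_SMh[OF b] fst_SMh[OF c]
      unfolding gsparse_less_def sparse_less_def by auto
  qed
  show "totalp_on (SMh M) (gsparse_less M lt)"
  proof (rule totalp_onI)
    fix a b
    assume a: "a \<in> SMh M" and b: "b \<in> SMh M" and "a \<noteq> b"
    show "gsparse_less M lt a b \<or> gsparse_less M lt b a"
    proof (cases "snd a = snd b")
      case True
      with \<open>a \<noteq> b\<close> have "fst a \<noteq> fst b"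
        by (simp add: prod_eq_iff)
      then show ?thesis
        using True total[OF fst_SMh[OF a] fst_SMh[OF b]]
        unfolding gsparse_less_def sparse_less_def by auto
    next
      case False
      then show ?thesis
        unfolding gsparse_less_def by auto
    qed
  qed
qed

text \<open>The affine degree is only subadditive; hypothesis \<open>deg\<close> makes it additive at \<open>t + l\<close>,
  so that \<open>t + k\<close> cannot overtake \<open>t + l\<close> in affine degree.\<close>
lemma gsparse_less_add_left:
  assumes mo: "monomial_order (SM M) lt" and SMh: "t \<in> SMh M" "k \<in> SMh M" "l \<in> SMh M"
    and snd_eq: "snd k = snd l" and less: "gsparse_less M lt k l"
    and deg: "adeg M (fst t) + adeg M (fst l) = adeg M (fst (t + l))"
  shows "gsparse_less M lt (t + k) (t + l)"
proof -
  have compat: "lt (x + z) (y + z)" if "x \<in> SM M" "y \<in> SM M" "z \<in> SM M" "lt x y" for x y z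
    using mo that unfolding monomial_order_def by blast
  have subadd: "adeg M (fst t + fst k) \<le> adeg M (fst t) + adeg M (fst k)"
    using SMh by (intro adeg_add_le)
  have "sparse_less M lt (fst t + fst k) (fst t + fst l)"
  proof (cases "adeg M (fst k) < adeg M (fst l)")
    case True
    then show ?thesis
      using subadd deg unfolding sparse_less_def by simp
  next
    case False
    with less snd_eq have "adeg M (fst k) = adeg M (fst l)" "lt (fst k) (fst l)"
      unfolding gsparse_less_def sparse_less_def by auto
    moreover have "lt (fst t + fst k) (fst t + fst l)"
      using compat[OF fst_SMh[OF SMh(2)] fst_SMh[OF SMh(3)] fst_SMh[OF SMh(1)]] calculation(2)
      by (simp add: add.commute)
    ultimately show ?thesis
      using subadd deg unfolding sparse_less_def by auto
  qed
  then show ?thesis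
    using snd_eq unfolding gsparse_less_def by simp
qed

lemma lm_eqI:
  assumes asym: "asymp_on S lt" and keys: "Poly_Mapping.keys f \<subseteq> S"
    and m: "m \<in> Poly_Mapping.keys f" "\<And>m'. m' \<in> Poly_Mapping.keys f \<Longrightarrow> m' \<noteq> m \<Longrightarrow> lt m' m"
  shows "lm lt f = m"
  unfolding lm_def
proof (rule the_equality)
  show "m \<in> Poly_Mapping.keys f \<and> (\<forall>m'\<in>Poly_Mapping.keys f. m' \<noteq> m \<longrightarrow> lt m' m)"
    using m by blast
  fix m2
  assume m2: "m2 \<in> Poly_Mapping.keys f \<and> (\<forall>m'\<in>Poly_Mapping.keys f. m' \<noteq> m2 \<longrightarrow> lt m' m2)"
  show "m2 = m"
  proof (rule ccontr)
    assume "m2 \<noteq> m"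
    then have "lt m2 m" "lt m m2"
      using m m2 by auto
    then show False
      using asymp_onD[OF asym, of m2 m] m2 m(1) keys by blast
  qed
qed

lemma lm_greatest:
  assumes asym: "asymp_on S lt" and trans: "transp_on S lt" and total: "totalp_on S lt"
    and keys: "Poly_Mapping.keys f \<subseteq> S" and "f \<noteq> 0"
  shows "lm lt f \<in> Poly_Mapping.keys f"
    "\<And>m. m \<in> Poly_Mapping.keys f \<Longrightarrow> m \<noteq> lm lt f \<Longrightarrow> lt m (lm lt f)"
proof -
  obtain m where m: "m \<in> Poly_Mapping.keys f"
    and maximal: "\<forall>m'\<in>Poly_Mapping.keys f. m' \<noteq> m \<longrightarrow> \<not> lt m m'"
    using Finite_Set.bex_max_element[OF finite_keys asymp_on_subset[OF asym keys]
        transp_on_subset[OF trans keys]] \<open>f \<noteq> 0\<close> by auto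
  have greatest: "lt m' m" if "m' \<in> Poly_Mapping.keys f" "m' \<noteq> m" for m'
    using totalp_onD[OF total, of m' m] maximal that m keys by blast
  have "lm lt f = m"
    using asym keys m greatest by (rule lm_eqI)
  then show "lm lt f \<in> Poly_Mapping.keys f"
    "\<And>m'. m' \<in> Poly_Mapping.keys f \<Longrightarrow> m' \<noteq> lm lt f \<Longrightarrow> lt m' (lm lt f)"
    using m greatest by auto
qed

lemma is_ideal_keys: "is_ideal S I \<Longrightarrow> f \<in> I \<Longrightarrow> Poly_Mapping.keys f \<subseteq> S"
  unfolding is_ideal_def salg_def by blast

lemma is_ideal_mon_mult: "is_ideal S I \<Longrightarrow> f \<in> I \<Longrightarrow> t \<in> S \<Longrightarrow> mon t * f \<in> I"
  unfolding is_ideal_def by (simp add: salg_def mon_def)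

lemma is_ideal_diff_smult:
  assumes I: "is_ideal S I" and "0 \<in> S" "f \<in> I" "g \<in> I"
  shows "f - Poly_Mapping.single 0 c * g \<in> I"
proof -
  have "Poly_Mapping.single 0 (- c) * g \<in> I"
    using assms unfolding is_ideal_def by (simp add: salg_def)
  then have "f + Poly_Mapping.single 0 (- c) * g \<in> I"
    using I \<open>f \<in> I\<close> unfolding is_ideal_def by blast
  then show ?thesis
    by (simp add: single_uminus)
qed

lemma homogeneous_keys:
  assumes "homogeneous g" "k \<in> Poly_Mapping.keys g"
  shows "snd k = hdeg g"
proof -
  obtain d where "\<forall>m\<in>Poly_Mapping.keys g. snd m = d"
    using assms(1) unfolding homogeneous_def by blast
  then have "\<forall>m\<in>Poly_Mapping.keys g. snd m = hdeg g"
    unfolding hdeg_def by (rule someI)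
  with assms(2) show ?thesis
    by blast
qed

lemma lm_mon_mult:
  fixes g :: "_ \<Rightarrow>\<^sub>0 'k::comm_semiring_1"
  assumes mo: "monomial_order (SM M) lt" and keys: "Poly_Mapping.keys g \<subseteq> SMh M"
    and hom: "homogeneous g" and "g \<noteq> 0" and t: "t \<in> SMh M"
    and deg: "adeg M (fst t) + adeg M (fst (lm (gsparse_less M lt) g))
      = adeg M (fst (t + lm (gsparse_less M lt) g))"
  shows "lm (gsparse_less M lt) (mon t * g) = t + lm (gsparse_less M lt) g"
proof -
  let ?lth = "gsparse_less M lt" and ?L = "lm (gsparse_less M lt) g"
  note order = gsparse_less_strict_linear[OF mo]
  note lm_g = lm_greatest[OF order keys \<open>g \<noteq> 0\<close>]
  show ?thesis
  proof (rule lm_eqI[OF order(1)])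
    show "Poly_Mapping.keys (mon t * g) \<subseteq> SMh M"
      unfolding keys_mon_mult using keys t SMh_add by blast
    show "t + ?L \<in> Poly_Mapping.keys (mon t * g)"
      using lm_g(1) by (simp add: keys_mon_mult)
    fix m
    assume "m \<in> Poly_Mapping.keys (mon t * g)" "m \<noteq> t + ?L"
    then obtain k where k: "k \<in> Poly_Mapping.keys g" "k \<noteq> ?L" and m: "m = t + k"
      by (auto simp: keys_mon_mult)
    have "snd k = snd ?L"
      using homogeneous_keys[OF hom] k(1) lm_g(1) by simp
    then show "?lth m (t + ?L)"
      unfolding m using gsparse_less_add_left[OF mo t _ _ _ lm_g(2)[OF k] deg] k(1) lm_g(1) keys
      by blast
  qed
qed

lemma keys_mon_mult_mons_deg:
  fixes g :: "_ \<Rightarrow>\<^sub>0 'k::comm_semiring_1"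
  assumes keys: "Poly_Mapping.keys g \<subseteq> SMh M" and hom: "homogeneous g"
    and u: "u \<in> mons_deg M (d - hdeg g)"
  shows "Poly_Mapping.keys (mon u * g) \<subseteq> mons_deg M d"
proof
  fix x
  assume "x \<in> Poly_Mapping.keys (mon u * g)"
  then obtain k where k: "k \<in> Poly_Mapping.keys g" and x: "x = u + k"
    by (auto simp: keys_mon_mult)
  have "x \<in> SMh M"
    unfolding x using u k keys by (intro SMh_add) (auto simp: mons_deg_def)
  moreover have "snd x = d"
    unfolding x using u homogeneous_keys[OF hom k] by (simp add: mons_deg_def)
  ultimately show "x \<in> mons_deg M d"
    by (simp add: mons_deg_def)
qed

section \<open>The Macaulay matrices of a sparse Groebner basis\<close>

text \<open>\<open>divisible_mons\<close>, \<open>reducer ` divisible_mons\<close> and \<open>products\<close> are the sets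
  \<open>\<N>\<close>, \<open>\<R>\<close> and the rows of \<open>\<M>\<^sub>D\<close>: \<open>reducer m\<close> is \<open>X\<^sup>t g\<close> for the associated
  \<open>g = assoc m\<close>, with the \<open>\<delta>\<close>-divisibility cofactor \<open>t = m - LM(g)\<close>.\<close>

locale sparse_macaulay =
  fixes M :: "('n::finite \<Rightarrow> real) set"
    and lt :: "('n \<Rightarrow> int) \<Rightarrow> ('n \<Rightarrow> int) \<Rightarrow> bool"
    and Ih G :: "(('n \<Rightarrow> int) \<times> int \<Rightarrow>\<^sub>0 'k::field) set"
    and D :: nat
    and assoc :: "('n \<Rightarrow> int) \<times> int \<Rightarrow> (('n \<Rightarrow> int) \<times> int \<Rightarrow>\<^sub>0 'k)"
    and cols :: "(('n \<Rightarrow> int) \<times> int) list"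
  assumes monomial_order: "monomial_order (SM M) lt"
    and ideal: "is_ideal (SMh M) Ih"
    and GB: "sparse_GB M lt Ih G"
    and G_homogeneous: "\<forall>g\<in>G. homogeneous g"
    and assoc_divides: "\<And>m g. m \<in> mons_deg M (int D) \<Longrightarrow> g \<in> G \<Longrightarrow> g \<noteq> 0 \<Longrightarrow>
      ddvd M TYPE('k) (lm (gsparse_less M lt) g) m \<Longrightarrow>
      assoc m \<in> G \<and> assoc m \<noteq> 0 \<and> ddvd M TYPE('k) (lm (gsparse_less M lt) (assoc m)) m"
    and cols_distinct: "distinct cols"
    and set_cols: "set cols = mons_deg M (int D)"
    and cols_sorted: "sorted_wrt (\<lambda>a b. gsparse_less M lt b a) cols"
begin

abbreviation lth :: "('n \<Rightarrow> int) \<times> int \<Rightarrow> ('n \<Rightarrow> int) \<times> int \<Rightarrow> bool" where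
  "lth \<equiv> gsparse_less M lt"

definition divisible_mons :: "(('n \<Rightarrow> int) \<times> int) set" where
  "divisible_mons = {m \<in> mons_deg M (int D). \<exists>g\<in>G. g \<noteq> 0 \<and> ddvd M TYPE('k) (lm lth g) m}"

definition reducer :: "('n \<Rightarrow> int) \<times> int \<Rightarrow> (('n \<Rightarrow> int) \<times> int \<Rightarrow>\<^sub>0 'k)" where
  "reducer m = mon (m - lm lth (assoc m)) * assoc m"

definition products :: "(('n \<Rightarrow> int) \<times> int \<Rightarrow>\<^sub>0 'k) set" where
  "products = {mon u * g | u g. g \<in> G \<and> u \<in> mons_deg M (int D - hdeg g)}"

lemmas lth_order = gsparse_less_strict_linear[OF monomial_order]

abbreviation ncols :: nat where
  "ncols \<equiv> length cols"

lemma cols_SMh: "set cols \<subseteq> SMh M"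
  using set_cols by (auto simp: mons_deg_def)

lemma cols_less: "i < j \<Longrightarrow> j < ncols \<Longrightarrow> lth (cols ! j) (cols ! i)"
  using sorted_wrt_nth_less[OF cols_sorted] by blast

lemma G_keys: "g \<in> G \<Longrightarrow> Poly_Mapping.keys g \<subseteq> SMh M"
  using GB ideal is_ideal_keys unfolding sparse_GB_def by blast

lemma GB_lm_divides:
  "f \<in> Ih \<Longrightarrow> f \<noteq> 0 \<Longrightarrow> \<exists>g\<in>G. g \<noteq> 0 \<and> ddvd M TYPE('k) (lm lth g) (lm lth f)"
  using GB[unfolded sparse_GB_def, THEN conjunct2, THEN conjunct2] by blast

lemma products_props:
  assumes "f \<in> products"
  shows "f \<in> Ih" "Poly_Mapping.keys f \<subseteq> set cols"
proof -
  obtain u g where f: "f = mon u * g" and g: "g \<in> G" and u: "u \<in> mons_deg M (int D - hdeg g)"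
    using assms unfolding products_def by blast
  show "f \<in> Ih"
    unfolding f using GB g u ideal
    by (intro is_ideal_mon_mult) (auto simp: sparse_GB_def mons_deg_def)
  show "Poly_Mapping.keys f \<subseteq> set cols"
    unfolding f set_cols using G_keys[OF g] G_homogeneous g u by (intro keys_mon_mult_mons_deg) auto
qed

lemma reducer_props:
  assumes m: "m \<in> divisible_mons"
  shows "reducer m \<in> products" "reducer m \<noteq> 0" "lm lth (reducer m) = m"
proof -
  let ?g = "assoc m" and ?L = "lm lth (assoc m)"
  have m_deg: "m \<in> mons_deg M (int D)" and g: "?g \<in> G" "?g \<noteq> 0"
    and dvd: "ddvd M TYPE('k) ?L m"
    using m assoc_divides unfolding divisible_mons_def by blast+
  have cofactor: "m - ?L \<in> SMh M" and deg: "adeg M (fst ?L) + adeg M (fst (m - ?L)) = adeg M (fst m)"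
    using dvd unfolding ddvd_iff by blast+
  have "?L \<in> Poly_Mapping.keys ?g"
    using lm_greatest(1)[OF lth_order G_keys[OF g(1)] g(2)] .
  then have "snd ?L = hdeg ?g"
    using G_homogeneous g(1) homogeneous_keys by blast
  then have "m - ?L \<in> mons_deg M (int D - hdeg ?g)"
    using cofactor m_deg by (auto simp: mons_deg_def)
  then show "reducer m \<in> products"
    unfolding reducer_def products_def using g(1) by blast
  show "reducer m \<noteq> 0"
    using g(2) by (simp add: reducer_def flip: keys_eq_empty add: keys_mon_mult)
  have "lm lth (reducer m) = m - ?L + ?L"
    unfolding reducer_def using G_homogeneous g cofactor deg
    by (intro lm_mon_mult[OF monomial_order G_keys[OF g(1)]]) (auto simp: add.commute)
  then show "lm lth (reducer m) = m"
    by simp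
qed

lemma reducer_ideal_keys:
  assumes "m \<in> divisible_mons"
  shows "reducer m \<in> Ih" "Poly_Mapping.keys (reducer m) \<subseteq> set cols"
  using products_props reducer_props(1)[OF assms] by blast+

lemma divisible_mons_subset: "divisible_mons \<subseteq> set cols"
  unfolding divisible_mons_def set_cols by blast

lemma leading_col:
  assumes keys: "Poly_Mapping.keys f \<subseteq> set cols" and "f \<noteq> 0"
    and j: "j < ncols" "cols ! j = lm lth f"
  shows "coeff_vec cols f $ j \<noteq> 0" "\<forall>l<j. coeff_vec cols f $ l = 0"
proof -
  have keys_SMh: "Poly_Mapping.keys f \<subseteq> SMh M"
    using keys cols_SMh by blast
  note lm_f = lm_greatest[OF lth_order keys_SMh \<open>f \<noteq> 0\<close>]
  show "coeff_vec cols f $ j \<noteq> 0"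
    using lm_f(1) j by (simp add: coeff_vec_def in_keys_iff)
  show "\<forall>l<j. coeff_vec cols f $ l = 0"
  proof (intro allI impI)
    fix l
    assume "l < j"
    then have "cols ! l \<noteq> cols ! j"
      using nth_eq_iff_index_eq[OF cols_distinct, of l j] j(1) by simp
    then have "lth (lm lth f) (cols ! l)" "cols ! l \<noteq> lm lth f"
      using cols_less[OF \<open>l < j\<close> j(1)] j(2) by auto
    then have "cols ! l \<notin> Poly_Mapping.keys f"
      using lm_f asymp_onD[OF lth_order(1)] keys_SMh by blast
    then show "coeff_vec cols f $ l = 0"
      using \<open>l < j\<close> j by (simp add: coeff_vec_def in_keys_iff)
  qed
qed

lemma lm_eq_col:
  assumes keys: "Poly_Mapping.keys f \<subseteq> set cols" and j: "j < ncols"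
    and lead: "coeff_vec cols f $ j \<noteq> 0" "\<forall>l<j. coeff_vec cols f $ l = 0"
  shows "lm lth f = cols ! j"
proof (rule lm_eqI[OF lth_order(1)])
  show "Poly_Mapping.keys f \<subseteq> SMh M"
    using keys cols_SMh by blast
  show "cols ! j \<in> Poly_Mapping.keys f"
    using lead(1) j by (simp add: coeff_vec_def in_keys_iff)
  fix m
  assume m: "m \<in> Poly_Mapping.keys f" "m \<noteq> cols ! j"
  then obtain l where l: "l < ncols" "m = cols ! l"
    using keys by (metis in_set_conv_nth subsetD)
  have "\<not> l < j"
    using lead(2) m(1) l by (auto simp: coeff_vec_def in_keys_iff)
  with m(2) l have "j < l"
    by (cases "l = j") auto
  then show "lth m (cols ! j)"
    using cols_less l by blast
qed

lemma leading_col_divisible: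
  assumes f: "f \<in> Ih" "Poly_Mapping.keys f \<subseteq> set cols" and j: "j < ncols"
    and lead: "coeff_vec cols f $ j \<noteq> 0" "\<forall>l<j. coeff_vec cols f $ l = 0"
  shows "cols ! j \<in> divisible_mons"
proof -
  have "f \<noteq> 0"
    using j lead(1) by (auto simp: coeff_vec_def)
  then obtain g where "g \<in> G" "g \<noteq> 0" "ddvd M TYPE('k) (lm lth g) (lm lth f)"
    using GB_lm_divides[OF f(1)] by blast
  moreover have "lm lth f = cols ! j"
    using lm_eq_col[OF f(2) j lead] .
  ultimately show ?thesis
    using nth_mem[OF j] set_cols unfolding divisible_mons_def by auto
qed

lemma diff_smult_reducer:
  assumes m: "m \<in> divisible_mons" and f: "f \<in> Ih" "Poly_Mapping.keys f \<subseteq> set cols"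
  shows "f - Poly_Mapping.single 0 c * reducer m \<in> Ih"
    "Poly_Mapping.keys (f - Poly_Mapping.single 0 c * reducer m) \<subseteq> set cols"
proof -
  show "f - Poly_Mapping.single 0 c * reducer m \<in> Ih"
    by (rule is_ideal_diff_smult[OF ideal zero_in_SMh f(1) reducer_ideal_keys(1)[OF m]])
  have "Poly_Mapping.keys (f - Poly_Mapping.single 0 c * reducer m)
      \<subseteq> Poly_Mapping.keys f \<union> Poly_Mapping.keys (Poly_Mapping.single 0 c * reducer m)"
    by (rule keys_diff)
  then show "Poly_Mapping.keys (f - Poly_Mapping.single 0 c * reducer m) \<subseteq> set cols"
    using keys_smult_subset[of c "reducer m"] f(2) reducer_ideal_keys(2)[OF m] by blast
qed

lemma coeff_vec_in_row_space:
  assumes rs: "set rs = reducer ` divisible_mons"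
    and f: "f \<in> Ih" "Poly_Mapping.keys f \<subseteq> set cols"
  shows "coeff_vec cols f \<in> row_space ncols (macaulay cols rs)"
proof -
  let ?W = "coeff_vec cols ` {f \<in> Ih. Poly_Mapping.keys f \<subseteq> set cols}"
  have "?W \<subseteq> row_space ncols (macaulay cols rs)"
  proof (rule subset_row_space_by_elimination[OF macaulay_carrier])
    show "?W \<subseteq> carrier_vec ncols"
      by (auto simp: coeff_vec_def)
    fix w j
    assume w: "w \<in> ?W" and j: "j < ncols" "w $ j \<noteq> 0" "\<forall>l<j. w $ l = 0"
    then obtain f where f: "f \<in> Ih" "Poly_Mapping.keys f \<subseteq> set cols" and w_def: "w = coeff_vec cols f"
      by blast
    have m: "cols ! j \<in> divisible_mons"
      using leading_col_divisible[OF f j(1)] j(2,3) unfolding w_def by blast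
    let ?r = "reducer (cols ! j)"
    have "?r \<in> set rs"
      using rs m by blast
    then obtain i where i: "i < length rs" "rs ! i = ?r"
      by (auto simp: in_set_conv_nth)
    have v_row: "coeff_vec cols ?r \<in> row_space ncols (macaulay cols rs)"
      using row_in_row_space[OF macaulay_carrier i(1)] row_macaulay[OF i(1)] i(2) by simp
    have v_lead: "coeff_vec cols ?r $ j \<noteq> 0" "\<forall>l<j. coeff_vec cols ?r $ l = 0"
      using leading_col[OF reducer_ideal_keys(2)[OF m] reducer_props(2)[OF m] j(1)] reducer_props(3)[OF m]
      by simp_all
    define c where "c = w $ j / coeff_vec cols ?r $ j"
    have "w - c \<cdot>\<^sub>v coeff_vec cols ?r \<in> ?W"
      unfolding w_def coeff_vec_diff_smult[symmetric] using diff_smult_reducer[OF m f] by blast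
    with v_row v_lead show "\<exists>v\<in>row_space ncols (macaulay cols rs). v $ j \<noteq> 0 \<and> (\<forall>l<j. v $ l = 0) \<and>
        w - (w $ j / v $ j) \<cdot>\<^sub>v v \<in> ?W"
      unfolding c_def by blast
  qed
  then show ?thesis
    using f by blast
qed

lemma row_space_macaulay_eq:
  assumes rs: "set rs = reducer ` divisible_mons" and ms: "set ms = products"
  shows "row_space ncols (macaulay cols rs) = row_space ncols (macaulay cols ms)"
proof
  show "row_space ncols (macaulay cols rs) \<subseteq> row_space ncols (macaulay cols ms)"
  proof (rule row_space_subsetI[OF macaulay_carrier macaulay_carrier])
    fix i
    assume i: "i < length rs"
    then have "rs ! i \<in> set ms"
      using rs ms reducer_props(1) nth_mem[OF i] by auto
    then obtain l where l: "l < length ms" "ms ! l = rs ! i"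
      by (auto simp: in_set_conv_nth)
    show "row (macaulay cols rs) i \<in> row_space ncols (macaulay cols ms)"
      using row_in_row_space[OF macaulay_carrier l(1)] l
      unfolding row_macaulay[OF i] row_macaulay[OF l(1)] by simp
  qed
  show "row_space ncols (macaulay cols ms) \<subseteq> row_space ncols (macaulay cols rs)"
  proof (rule row_space_subsetI[OF macaulay_carrier macaulay_carrier])
    fix l
    assume l: "l < length ms"
    then have "ms ! l \<in> products"
      using ms nth_mem by blast
    then show "row (macaulay cols ms) l \<in> row_space ncols (macaulay cols rs)"
      unfolding row_macaulay[OF l] using coeff_vec_in_row_space[OF rs] products_props by blast
  qed
qed

lemma Rows_rref_reducers_eq:
  assumes "set rs = reducer ` divisible_mons" "set ms = products"
  shows "Rows cols (rref (macaulay cols rs)) = Rows cols (rref (macaulay cols ms))"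
  using row_space_rref(1)[OF macaulay_carrier, of cols rs] row_space_rref(1)[OF macaulay_carrier, of cols ms]
  by (intro Rows_eqI rref_nonzero_rows_eq[OF macaulay_carrier macaulay_carrier]
      row_space_macaulay_eq[OF assms]) auto

lemma leading_cols_reducers:
  assumes rs: "set rs \<subseteq> reducer ` divisible_mons"
    and p: "\<And>i. i < length rs \<Longrightarrow> p i < ncols \<and> cols ! p i = lm lth (rs ! i)"
    and i: "i < length rs"
  shows "macaulay cols rs $$ (i, p i) \<noteq> 0 \<and> (\<forall>j<p i. macaulay cols rs $$ (i, j) = 0)"
proof -
  obtain m where m: "m \<in> divisible_mons" "rs ! i = reducer m"
    using rs nth_mem[OF i] by blast
  have entries: "macaulay cols rs $$ (i, j) = coeff_vec cols (rs ! i) $ j" if "j < ncols" for j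
    using i that by (simp add: macaulay_def coeff_vec_def)
  have "p i < ncols" "cols ! p i = lm lth (rs ! i)"
    using p[OF i] by auto
  from leading_col[OF reducer_ideal_keys(2)[OF m(1)] reducer_props(2)[OF m(1)], folded m(2), OF this]
  show ?thesis
    using \<open>p i < ncols\<close> by (simp add: entries)
qed

lemma inj_on_lm_reducers:
  assumes "set rs \<subseteq> reducer ` divisible_mons"
  shows "inj_on (lm lth) (set rs)"
proof (rule inj_onI)
  fix x y
  assume "x \<in> set rs" "y \<in> set rs" "lm lth x = lm lth y"
  moreover obtain m m' where "m \<in> divisible_mons" "x = reducer m" "m' \<in> divisible_mons" "y = reducer m'"
    using assms calculation(1,2) by blast
  ultimately show "x = y"
    by (simp add: reducer_props(3))
qed

lemma obtain_leading_cols: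
  assumes rs: "set rs \<subseteq> reducer ` divisible_mons"
  obtains p where "\<And>i. i < length rs \<Longrightarrow> p i < ncols \<and> cols ! p i = lm lth (rs ! i)"
proof -
  have "\<forall>i\<in>{..<length rs}. \<exists>j. j < ncols \<and> cols ! j = lm lth (rs ! i)"
  proof
    fix i
    assume "i \<in> {..<length rs}"
    then have "rs ! i \<in> reducer ` divisible_mons"
      using rs nth_mem[of i rs] by auto
    then obtain m where "m \<in> divisible_mons" "rs ! i = reducer m"
      by blast
    then have "lm lth (rs ! i) \<in> set cols"
      using reducer_props(3) divisible_mons_subset by auto
    then show "\<exists>j. j < ncols \<and> cols ! j = lm lth (rs ! i)"
      by (simp add: in_set_conv_nth eq_commute)
  qed
  then obtain p where "\<forall>i\<in>{..<length rs}. p i < ncols \<and> cols ! p i = lm lth (rs ! i)"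
    by (rule bchoice[elim_format]) blast
  with that show ?thesis
    by blast
qed

lemma full_rank_reducers:
  assumes distinct: "distinct rs" and rs: "set rs = reducer ` divisible_mons"
  shows "full_rank (macaulay cols rs)"
proof -
  obtain p where p: "\<And>i. i < length rs \<Longrightarrow> p i < ncols \<and> cols ! p i = lm lth (rs ! i)"
    using obtain_leading_cols[OF equalityD1[OF rs]] by blast
  have "inj_on p {..<length rs}"
  proof (rule inj_onI)
    fix i i'
    assume "i \<in> {..<length rs}" "i' \<in> {..<length rs}" "p i = p i'"
    then have i: "i < length rs" "i' < length rs"
      by auto
    then have "lm lth (rs ! i) = lm lth (rs ! i')"
      using p[OF i(1)] p[OF i(2)] \<open>p i = p i'\<close> by simp
    then have "rs ! i = rs ! i'"
      using inj_onD[OF inj_on_lm_reducers[OF equalityD1[OF rs]] _ nth_mem[OF i(1)] nth_mem[OF i(2)]]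
      by blast
    then show "i = i'"
      using nth_eq_iff_index_eq[OF distinct i] by simp
  qed
  have dims: "dim_row (macaulay cols rs) = length rs" "dim_col (macaulay cols rs) = ncols"
    by (simp_all add: macaulay_def)
  show ?thesis
    unfolding full_rank_def
  proof (intro disjI1 rows_indep_leading_cols)
    fix i
    assume "i < dim_row (macaulay cols rs)"
    then have i: "i < length rs"
      unfolding dims .
    show "p i < dim_col (macaulay cols rs) \<and> macaulay cols rs $$ (i, p i) \<noteq> 0 \<and>
        (\<forall>j<p i. macaulay cols rs $$ (i, j) = 0)"
      using leading_cols_reducers[OF equalityD1[OF rs] p i] p[OF i] unfolding dims by blast
  next
    show "inj_on p {..<dim_row (macaulay cols rs)}"
      unfolding dims by fact
  qed
qed

lemma reducers_of_divisible_cols: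
  defines "js \<equiv> filter (\<lambda>j. cols ! j \<in> divisible_mons) [0..<ncols]"
  shows "distinct (map (\<lambda>j. reducer (cols ! j)) js)"
    "set (map (\<lambda>j. reducer (cols ! j)) js) = reducer ` divisible_mons"
proof -
  have set_js: "set js = {j. j < ncols \<and> cols ! j \<in> divisible_mons}"
    unfolding js_def by auto
  have "(\<lambda>j. cols ! j) ` set js = divisible_mons"
  proof
    show "(\<lambda>j. cols ! j) ` set js \<subseteq> divisible_mons"
      unfolding set_js by blast
    show "divisible_mons \<subseteq> (\<lambda>j. cols ! j) ` set js"
    proof
      fix m
      assume m: "m \<in> divisible_mons"
      then obtain j where "j < ncols" "m = cols ! j"
        using divisible_mons_subset by (metis in_set_conv_nth subsetD)
      with m show "m \<in> (\<lambda>j. cols ! j) ` set js"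
        unfolding set_js by blast
    qed
  qed
  then show "set (map (\<lambda>j. reducer (cols ! j)) js) = reducer ` divisible_mons"
    unfolding set_map by (metis image_image)
  have lm_reducer: "lm lth (reducer (cols ! j)) = cols ! j" if "j \<in> set js" for j
    using that set_js reducer_props(3) by simp
  have "inj_on (\<lambda>j. reducer (cols ! j)) (set js)"
  proof (rule inj_onI)
    fix j j'
    assume j: "j \<in> set js" "j' \<in> set js" and eq: "reducer (cols ! j) = reducer (cols ! j')"
    have "cols ! j = cols ! j'"
      using lm_reducer[OF j(1)] lm_reducer[OF j(2)] unfolding eq by (rule trans[OF sym])
    moreover have "j < ncols" "j' < ncols"
      using j set_js by blast+
    ultimately show "j = j'"
      using nth_eq_iff_index_eq[OF cols_distinct] by blast
  qed
  then show "distinct (map (\<lambda>j. reducer (cols ! j)) js)"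
    unfolding js_def by (simp add: distinct_map)
qed

lemma ex_ref_reducers: "\<exists>rs. distinct rs \<and> set rs = reducer ` divisible_mons \<and> ref (macaulay cols rs)"
proof -
  define js where "js = filter (\<lambda>j. cols ! j \<in> divisible_mons) [0..<ncols]"
  define rs where "rs = map (\<lambda>j. reducer (cols ! j)) js"
  have rs: "distinct rs" "set rs = reducer ` divisible_mons"
    unfolding rs_def js_def by (rule reducers_of_divisible_cols)+
  have dims: "dim_row (macaulay cols rs) = length js" "dim_col (macaulay cols rs) = ncols"
    unfolding rs_def by (simp_all add: macaulay_def)
  have p: "js ! i < ncols \<and> cols ! (js ! i) = lm lth (rs ! i)" if i: "i < length rs" for i
  proof -
    have "i < length js"
      using i by (simp add: rs_def)
    then have "js ! i < ncols" "cols ! (js ! i) \<in> divisible_mons" "rs ! i = reducer (cols ! (js ! i))"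
      using nth_mem[of i js] unfolding rs_def js_def by auto
    then show ?thesis
      using reducer_props(3) by simp
  qed
  have "ref (macaulay cols rs)"
  proof (rule ref_leading_cols)
    fix i
    assume "i < dim_row (macaulay cols rs)"
    then have i: "i < length rs"
      using dims by (simp add: rs_def)
    show "js ! i < dim_col (macaulay cols rs) \<and> macaulay cols rs $$ (i, js ! i) \<noteq> 0 \<and>
        (\<forall>j<js ! i. macaulay cols rs $$ (i, j) = 0)"
      using leading_cols_reducers[OF equalityD1[OF rs(2)] p i] p[OF i] unfolding dims by blast
  next
    have sorted: "sorted_wrt (<) js"
      unfolding js_def by (intro sorted_wrt_filter) (simp add: sorted_wrt_upt)
    fix i
    assume "Suc i < dim_row (macaulay cols rs)"
    then show "js ! i < js ! Suc i"
      using sorted_wrt_nth_less[OF sorted, of i "Suc i"] dims by simp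
  qed
  with rs show ?thesis
    by blast
qed

end

theorem mainTheorem9:
  fixes M :: "('n::finite \<Rightarrow> real) set"
    and lt :: "('n \<Rightarrow> int) \<Rightarrow> ('n \<Rightarrow> int) \<Rightarrow> bool"
    and Ih G :: "(('n \<Rightarrow> int) \<times> int \<Rightarrow>\<^sub>0 'k::field_char_0) set"
    and D :: nat
    and assoc :: "('n \<Rightarrow> int) \<times> int \<Rightarrow> (('n \<Rightarrow> int) \<times> int \<Rightarrow>\<^sub>0 'k)"
    and cols :: "(('n \<Rightarrow> int) \<times> int) list"
  defines "lth \<equiv> gsparse_less M lt"
  defines "N \<equiv> {m \<in> mons_deg M (int D). \<exists>g\<in>G. g \<noteq> 0 \<and> ddvd M TYPE('k) (lm lth g) m}"
  defines "R \<equiv> {mon (THE t. t \<in> SMh M \<and> t + lm lth (assoc m) = m \<and>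
                    sdeg M (mon t :: _ \<Rightarrow>\<^sub>0 'k) + sdeg M (mon (lm lth (assoc m)) :: _ \<Rightarrow>\<^sub>0 'k)
                      = sdeg M (mon m :: _ \<Rightarrow>\<^sub>0 'k)) * assoc m | m. m \<in> N}"
  defines "Mrows \<equiv> {mon u * g | u g. g \<in> G \<and> u \<in> mons_deg M (int D - hdeg g)}"
  assumes polytope: "polytope M" and zero_in: "(0 :: 'n \<Rightarrow> real) \<in> M"
    and pointed_SM: "pointed (SM M)" and pointed_SMh: "pointed (SMh M)"
    and morder: "monomial_order (SM M) lt"
    and hom_ideal: "homogeneous_ideal (SMh M) Ih"
    and GB: "sparse_GB M lt Ih G" and G_hom: "\<forall>g\<in>G. homogeneous g"
    and G_fin: "finite G"
    and assoc: "\<forall>m\<in>N. assoc m \<in> G \<and> assoc m \<noteq> 0 \<and> ddvd M TYPE('k) (lm lth (assoc m)) m"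
    and cols: "distinct cols" "set cols = mons_deg M (int D)" "sorted_wrt (\<lambda>a b. lth b a) cols"
  shows "(\<forall>rs ms. distinct rs \<and> set rs = R \<and> distinct ms \<and> set ms = Mrows \<longrightarrow>
            Rows cols (rref (macaulay cols rs)) = Rows cols (rref (macaulay cols ms))
            \<and> full_rank (macaulay cols rs))
       \<and> (\<exists>rs. distinct rs \<and> set rs = R \<and> ref (macaulay cols rs))"
proof -
  interpret sparse_macaulay M lt Ih G D assoc cols
  proof unfold_locales
    show "is_ideal (SMh M) Ih"
      using hom_ideal unfolding homogeneous_ideal_def by blast
    show "assoc m \<in> G \<and> assoc m \<noteq> 0 \<and> ddvd M TYPE('k) (lm (gsparse_less M lt) (assoc m)) m"
      if "m \<in> mons_deg M (int D)" "g \<in> G" "g \<noteq> 0" "ddvd M TYPE('k) (lm (gsparse_less M lt) g) m" for m g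
      using assoc that unfolding N_def lth_def by blast
  qed (use morder GB G_hom cols in \<open>simp_all add: lth_def\<close>)
  have N: "N = divisible_mons"
    unfolding N_def divisible_mons_def lth_def ..
  have "mon (THE t. t \<in> SMh M \<and> t + lm lth (assoc m) = m \<and>
      sdeg M (mon t :: _ \<Rightarrow>\<^sub>0 'k) + sdeg M (mon (lm lth (assoc m)) :: _ \<Rightarrow>\<^sub>0 'k)
        = sdeg M (mon m :: _ \<Rightarrow>\<^sub>0 'k)) * assoc m = reducer m" if "m \<in> N" for m
    using assoc that unfolding reducer_def lth_def by (simp add: the_ddvd_cofactor)
  then have R: "R = reducer ` divisible_mons"
    unfolding R_def Setcompr_eq_image N[symmetric] by (rule image_cong[OF refl])
  have Mrows: "Mrows = products"
    unfolding Mrows_def products_def ..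
  show ?thesis
    unfolding R Mrows using Rows_rref_reducers_eq full_rank_reducers ex_ref_reducers by blast
qed

end
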